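(* Let $\lambda$ and $g$ be as in the context, let $q(-1)=-1$ and let $q(0)$ be the fixed point of $g$ with negative multiplier. Then \[ |g'(x)|\ge |g'(q(0))|>1 \] for all $x\in[q(-1),\hat{q}(0)]\cup[q(0),\hat{q}(-1)]$.
   Context: There is a unique constant $\lambda=2.5029\ldots$ and a unique infinitely (period-doubling) renormalizable analytic unimodal map $g:[-1,1]\to[-1,1]$ solving the Cvitanović–Feigenbaum–Coullet–Tresser functional equation $g(x)=-\lambda\, g^{2}(-x/\lambda)$ for $-1\le x\le1$ (here $g^2=g\circ g$). Here unimodal means: $-1$ is the unique fixed point with positive multiplier, $g(1)=-1$, and $g$ has a unique maximum at an interior nondegenerate critical point $c^{(0)}$. Moreover $g$ is analytic on a complex neighborhood of $[-1,1]$, even, concave on $[-c^{(1)},c^{(1)}]$ where $c^{(1)}=g(c^{(0)})$ is the critical value, satisfies $g(c^{(1)})=-c^{(1)}/\lambda$ and $g'(c^{(1)})=-\lambda$, and has negative Schwarzian derivative. For $x\ne c^{(0)}$ the reflection $\hat{x}$ is the point with $g(\hat x)=g(x)$, $\hat x\ne x$; and $\hat{c}^{(0)}=c^{(0)}$. *)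

theory Defs
  imports "HOL-Analysis.Analysis"
begin

definition schwarzian :: "(real \<Rightarrow> real) \<Rightarrow> real \<Rightarrow> real" where
  "schwarzian f x =
     (deriv (deriv (deriv f))) x / deriv f x
       - 3/2 * ((deriv (deriv f)) x / deriv f x)^2"

end

theory Submission
  imports Defs "HOL-Complex_Analysis.Cauchy_Integral_Formula"
begin

text \<open>Evaluating the functional equation at \<open>x = 1\<close> gives \<open>g (g (1/lam)) = 1/lam\<close>. The fixed
  point \<open>q\<close> of negative multiplier is \<open>1/lam\<close>: if \<open>g (1/lam) < 1/lam\<close>, rescaling a
  period-two point by \<open>-lam\<close> produces a fixed point in \<open>(-1, 0)\<close>, where \<open>g\<close> lies above the
  diagonal; if \<open>g (1/lam) > 1/lam\<close>, the minimum principle for maps of negative Schwarzian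
  forces \<open>g \<circ> g = id\<close> on an interval. Differentiating the functional equation gives
  \<open>g' (-1) = g' q\<^sup>2\<close> and \<open>g' (-x) = - g' x\<close>, and a third-order analysis of \<open>g \<circ> g - id\<close> at
  \<open>q\<close> gives \<open>\<bar>g' q\<bar> > 1\<close>. By the minimum principle \<open>\<bar>g'\<bar>\<close> on \<open>[-1, -q]\<close> and \<open>[q, 1]\<close> is
  at least its endpoint values \<open>g' q\<^sup>2\<close> and \<open>\<bar>g' q\<bar>\<close>.\<close>

lemma holomorphic_restriction_has_real_derivative:
  fixes G :: "complex \<Rightarrow> complex" and f :: "real \<Rightarrow> real"
  assumes S: "open S" and hol: "G holomorphic_on S"
    and restr: "\<And>t. complex_of_real t \<in> S \<Longrightarrow> G (complex_of_real t) = complex_of_real (f t)"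
    and x: "complex_of_real x \<in> S"
  shows "(f has_real_derivative deriv f x) (at x)"
    and "deriv G (complex_of_real x) = complex_of_real (deriv f x)"
proof -
  define G' where "G' = deriv G (complex_of_real x)"
  have T: "open (complex_of_real -` S)"
    by (rule open_vimage[OF S]) (intro continuous_intros)
  have "((\<lambda>t. G (complex_of_real t)) has_vector_derivative G') (at x)"
    unfolding G'_def using hol S x by (intro has_vector_derivative_real_field holomorphic_derivI)
  then have vd: "((\<lambda>t. complex_of_real (f t)) has_vector_derivative G') (at x)"
    by (rule has_vector_derivative_transform_within_open[OF _ T]) (use x restr in auto)
  have "((\<lambda>t. Re (complex_of_real (f t))) has_field_derivative Re G') (at x)"
    by (rule has_field_derivative_Re[OF vd])
  then have f': "(f has_real_derivative Re G') (at x)" by simp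
  have "((\<lambda>t. Im (complex_of_real (f t))) has_field_derivative Im G') (at x)"
    by (rule has_field_derivative_Im[OF vd])
  then have "Im G' = 0" using DERIV_unique[OF _ DERIV_const] by simp
  moreover have "deriv f x = Re G'" using f' by (rule DERIV_imp_deriv)
  ultimately show "(f has_real_derivative deriv f x) (at x)" "G' = complex_of_real (deriv f x)"
    using f' by (simp_all add: complex_eq_iff)
qed

lemma holomorphic_restriction_has_real_derivatives:
  fixes G :: "complex \<Rightarrow> complex" and f :: "real \<Rightarrow> real"
  assumes S: "open S" and hol: "G holomorphic_on S"
    and restr: "\<And>t. complex_of_real t \<in> S \<Longrightarrow> G (complex_of_real t) = complex_of_real (f t)"
    and x: "complex_of_real x \<in> S"
  shows "(f has_real_derivative deriv f x) (at x)"
    and "(deriv f has_real_derivative deriv (deriv f) x) (at x)"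
    and "(deriv (deriv f) has_real_derivative deriv (deriv (deriv f)) x) (at x)"
proof -
  have hol': "deriv G holomorphic_on S" and hol'': "deriv (deriv G) holomorphic_on S"
    using hol S by (auto intro!: holomorphic_deriv)
  note d1 = holomorphic_restriction_has_real_derivative[OF S hol restr]
  note d2 = holomorphic_restriction_has_real_derivative[OF S hol' d1(2)]
  note d3 = holomorphic_restriction_has_real_derivative[OF S hol'' d2(2)]
  show "(f has_real_derivative deriv f x) (at x)"
    and "(deriv f has_real_derivative deriv (deriv f) x) (at x)"
    and "(deriv (deriv f) has_real_derivative deriv (deriv (deriv f)) x) (at x)"
    using d1(1) d2(1) d3(1) x by blast+
qed

lemma schwarzian_neg_iff:
  assumes "deriv f x \<noteq> 0"
  shows "schwarzian f x < 0 \<longleftrightarrow>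
           deriv (deriv (deriv f)) x * deriv f x - 3/2 * (deriv (deriv f) x)^2 < 0"
proof -
  have "deriv (deriv (deriv f)) x * deriv f x - 3/2 * (deriv (deriv f) x)^2
          = schwarzian f x * (deriv f x)^2"
    unfolding schwarzian_def using assms by (simp add: field_simps power2_eq_square)
  moreover have "(deriv f x)^2 > 0" using assms by simp
  ultimately show ?thesis by (simp add: mult_less_0_iff)
qed

lemma higher_chain_rule:
  fixes f' f'' f''' h h' h'' h''' :: "real \<Rightarrow> real"
  assumes h: "(h has_real_derivative h' x) (at x)"
    and h': "(h' has_real_derivative h'' x) (at x)"
    and h'': "(h'' has_real_derivative h''' x) (at x)"
    and f': "(f' has_real_derivative f'' (h x)) (at (h x))"
    and f'': "(f'' has_real_derivative f''' (h x)) (at (h x))"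
  shows "((\<lambda>t. f' (h t) * h' t) has_real_derivative f'' (h x) * (h' x)^2 + f' (h x) * h'' x) (at x)"
    and "((\<lambda>t. f'' (h t) * (h' t)^2 + f' (h t) * h'' t) has_real_derivative
           f''' (h x) * (h' x)^3 + 3 * f'' (h x) * h' x * h'' x + f' (h x) * h''' x) (at x)"
proof -
  have f'h: "((\<lambda>t. f' (h t)) has_real_derivative f'' (h x) * h' x) (at x)"
    using DERIV_chain2[OF f' h] .
  have f''h: "((\<lambda>t. f'' (h t)) has_real_derivative f''' (h x) * h' x) (at x)"
    using DERIV_chain2[OF f'' h] .
  show "((\<lambda>t. f' (h t) * h' t) has_real_derivative f'' (h x) * (h' x)^2 + f' (h x) * h'' x) (at x)"
    using DERIV_mult[OF f'h h'] by (simp add: power2_eq_square algebra_simps)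
  have sq: "((\<lambda>t. (h' t)^2) has_real_derivative 2 * h' x * h'' x) (at x)"
    using DERIV_mult[OF h' h'] by (simp add: power2_eq_square algebra_simps)
  show "((\<lambda>t. f'' (h t) * (h' t)^2 + f' (h t) * h'' t) has_real_derivative
           f''' (h x) * (h' x)^3 + 3 * f'' (h x) * h' x * h'' x + f' (h x) * h''' x) (at x)"
    using DERIV_add[OF DERIV_mult[OF f''h sq] DERIV_mult[OF f'h h'']]
    by (simp add: power2_eq_square power3_eq_cube algebra_simps)
qed

text \<open>The chain rule \<open>S(f \<circ> h) = (S f \<circ> h) h'\<^sup>2 + S h\<close> for the Schwarzian,
  with denominators cleared.\<close>
lemma neg_schwarzian_comp:
  fixes f1 f2 f3 h1 h2 h3 :: real
  assumes "f3 * f1 - 3/2 * f2^2 < 0" "h3 * h1 - 3/2 * h2^2 < 0" "f1 \<noteq> 0" "h1 \<noteq> 0"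
  shows "(f3 * h1^3 + 3 * f2 * h1 * h2 + f1 * h3) * (f1 * h1) - 3/2 * (f2 * h1^2 + f1 * h2)^2 < 0"
proof -
  have "(f3 * h1^3 + 3 * f2 * h1 * h2 + f1 * h3) * (f1 * h1) - 3/2 * (f2 * h1^2 + f1 * h2)^2
          = h1^4 * (f3 * f1 - 3/2 * f2^2) + f1^2 * (h3 * h1 - 3/2 * h2^2)"
    by (simp add: power2_eq_square power3_eq_cube power4_eq_xxxx algebra_simps)
  moreover have "h1^4 * (f3 * f1 - 3/2 * f2^2) < 0" "f1^2 * (h3 * h1 - 3/2 * h2^2) < 0"
    using assms by (simp_all add: mult_pos_neg)
  ultimately show ?thesis by linarith
qed

lemma eventually_greater_at_left_if_DERIV_neg:
  fixes f :: "real \<Rightarrow> real"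
  assumes "(f has_real_derivative D) (at x)" "D < 0"
  shows "\<forall>\<^sub>F t in at_left x. f x < f t"
proof -
  obtain d where "d > 0" and d: "\<And>h. h > 0 \<Longrightarrow> h < d \<Longrightarrow> f x < f (x - h)"
    using DERIV_neg_dec_left[OF assms] by blast
  have "f x < f t" if "t \<in> {x - d<..<x}" for t
    using d[of "x - t"] that by auto
  moreover have "\<forall>\<^sub>F t in at_left x. t \<in> {x - d<..<x}"
    using \<open>d > 0\<close> by (intro eventually_at_left_real) simp
  ultimately show ?thesis by (auto elim: eventually_mono)
qed

lemma eventually_less_at_left_if_deriv_pos:
  fixes f f' :: "real \<Rightarrow> real"
  assumes deriv: "\<forall>\<^sub>F t in nhds x. (f has_real_derivative f' t) (at t)"
    and pos: "\<forall>\<^sub>F t in at_left x. 0 < f' t"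
  shows "\<forall>\<^sub>F t in at_left x. f t < f x"
proof -
  obtain e where "e > 0" and e: "\<And>t. dist t x < e \<Longrightarrow> (f has_real_derivative f' t) (at t)"
    using deriv unfolding eventually_nhds_metric by blast
  obtain b where "b < x" and b: "\<And>t. b < t \<Longrightarrow> t < x \<Longrightarrow> 0 < f' t"
    using pos unfolding eventually_at_left_field by blast
  have "f t < f x" if "max b (x - e) < t" "t < x" for t
  proof (rule DERIV_pos_imp_increasing_open[of t x f])
    have "dist s x < e" if "s \<in> {t..x}" for s using that \<open>max b (x - e) < t\<close> \<open>t < x\<close>
      by (auto simp: dist_real_def)
    then show "continuous_on {t..x} f"
      using e by (meson DERIV_isCont continuous_at_imp_continuous_on)
    show "\<exists>y. (f has_real_derivative y) (at s) \<and> 0 < y" if "t < s" "s < x" for s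
      using that \<open>max b (x - e) < t\<close> e[of s] b[of s] by (auto simp: dist_real_def)
  qed (fact that)
  then show ?thesis
    unfolding eventually_at_left_field using \<open>b < x\<close> \<open>e > 0\<close>
    by (intro exI[of _ "max b (x - e)"]) auto
qed

lemma eventually_greater_at_left_if_deriv_neg:
  fixes f f' :: "real \<Rightarrow> real"
  assumes "\<forall>\<^sub>F t in nhds x. (f has_real_derivative f' t) (at t)"
    and "\<forall>\<^sub>F t in at_left x. f' t < 0"
  shows "\<forall>\<^sub>F t in at_left x. f x < f t"
proof -
  have "\<forall>\<^sub>F t in nhds x. ((\<lambda>t. - f t) has_real_derivative - f' t) (at t)"
    using assms(1) by (rule eventually_mono) (rule DERIV_minus)
  moreover have "\<forall>\<^sub>F t in at_left x. 0 < - f' t"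
    using assms(2) by (rule eventually_mono) simp
  ultimately show ?thesis
    using eventually_less_at_left_if_deriv_pos[where f = "\<lambda>t. - f t" and f' = "\<lambda>t. - f' t"] by simp
qed

text \<open>At an interior minimum \<open>f2\<close> vanishes, so the Schwarzian condition forces \<open>f3 < 0\<close>,
  i.e. a strict local maximum.\<close>
lemma neg_schwarzian_min_at_endpoints:
  fixes f1 f2 f3 :: "real \<Rightarrow> real"
  assumes "u \<le> v"
    and f1: "\<And>x. x \<in> {u..v} \<Longrightarrow> (f1 has_real_derivative f2 x) (at x)"
    and f2: "\<And>x. x \<in> {u..v} \<Longrightarrow> (f2 has_real_derivative f3 x) (at x)"
    and pos: "\<And>x. x \<in> {u..v} \<Longrightarrow> 0 < f1 x"
    and schwarzian: "\<And>x. x \<in> {u..v} \<Longrightarrow> f3 x * f1 x - 3/2 * (f2 x)^2 < 0"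
    and x: "x \<in> {u..v}"
  shows "min (f1 u) (f1 v) \<le> f1 x"
proof -
  have "continuous_on {u..v} f1"
    using f1 by (meson DERIV_isCont continuous_at_imp_continuous_on)
  then obtain m where m: "m \<in> {u..v}" and min: "\<And>y. y \<in> {u..v} \<Longrightarrow> f1 m \<le> f1 y"
    using continuous_attains_inf[OF compact_Icc _ \<open>continuous_on {u..v} f1\<close>] \<open>u \<le> v\<close> by auto
  show ?thesis
  proof (cases "m = u \<or> m = v")
    case True
    then show ?thesis using min x by auto
  next
    case False
    then have m': "m \<in> {u<..<v}" using m by auto
    have "f2 m = 0"
      by (rule DERIV_local_min[OF f1[OF m], of "min (m - u) (v - m)"])
        (use m' min in \<open>auto simp: abs_less_iff\<close>)
    with schwarzian[OF m] pos[OF m] have "f3 m < 0" by (simp add: mult_less_0_iff)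
    have "\<forall>\<^sub>F t in nhds m. t \<in> {u<..<v}" using m' by (intro eventually_nhds_in_open) auto
    then have "\<forall>\<^sub>F t in nhds m. (f1 has_real_derivative f2 t) (at t)"
      by (rule eventually_mono) (use f1 in auto)
    moreover have "\<forall>\<^sub>F t in at_left m. 0 < f2 t"
      using eventually_greater_at_left_if_DERIV_neg[OF f2[OF m] \<open>f3 m < 0\<close>] \<open>f2 m = 0\<close> by simp
    ultimately have "\<forall>\<^sub>F t in at_left m. f1 t < f1 m"
      by (rule eventually_less_at_left_if_deriv_pos)
    moreover have "\<forall>\<^sub>F t in at_left m. t \<in> {u<..<m}"
      using m' by (intro eventually_at_left_real) auto
    ultimately obtain t where "f1 t < f1 m" "t \<in> {u<..<m}"
      using eventually_happens'[OF trivial_limit_at_left_real] eventually_conj by blast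
    then show ?thesis using min[of t] m' by auto
  qed
qed

lemma concave_on_imp_below_tangent:
  fixes f :: "real \<Rightarrow> real"
  assumes "concave_on A f" "connected A" "c \<in> interior A" "x \<in> A"
    and "(f has_real_derivative D) (at c)"
  shows "f x - f c \<le> D * (x - c)"
proof -
  have "convex_on A (\<lambda>t. - f t)" using assms(1) by (simp add: concave_on_def)
  moreover have "((\<lambda>t. - f t) has_real_derivative - D) (at c within A)"
    using assms(5) by (auto intro: DERIV_minus has_field_derivative_at_within)
  ultimately show ?thesis
    using convex_on_imp_above_tangent[of A "\<lambda>t. - f t" c x "- D"] assms(2-4) by simp
qed

lemma eq_on_Icc_of_eq_on_Ioo:
  fixes f h :: "real \<Rightarrow> real"
  assumes "a < b" "continuous_on {a..b} f" "continuous_on {a..b} h"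
    and "\<And>x. x \<in> {a<..<b} \<Longrightarrow> f x = h x" and "x \<in> {a..b}"
  shows "f x = h x"
  using continuous_constant_on_closure[of "{a<..<b}" "\<lambda>t. f t - h t" 0 x] assms
  by (auto intro: continuous_on_diff)

lemma has_real_derivative_locally_constant:
  fixes f :: "real \<Rightarrow> real"
  assumes "(f has_real_derivative D) (at x)" "x \<in> {a<..<b}" "\<And>t. t \<in> {a<..<b} \<Longrightarrow> f t = c"
  shows "D = 0"
proof -
  have "(f has_real_derivative 0) (at x)"
    by (rule has_field_derivative_transform_within_open[of "\<lambda>t. c" 0 x "{a<..<b}"])
      (use assms in auto)
  then show ?thesis using DERIV_unique[OF assms(1)] by simp
qed

lemma strict_max_of_even_at_zero:
  fixes g :: "real \<Rightarrow> real"
  assumes "\<forall>x\<in>{-1..1}. g (- x) = g x" "c \<in> {-1<..<1}" "\<forall>x\<in>{-1..1}. x \<noteq> c \<longrightarrow> g x < g c"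
  shows "c = 0"
proof (rule ccontr)
  assume "c \<noteq> 0"
  moreover have "- c \<in> {-1..1}" using assms(2) by auto
  ultimately have "g (- c) < g c" using assms(3) by simp
  moreover have "g (- c) = g c" using assms(1,2) by simp
  ultimately show False by simp
qed

text \<open>The derivatives of \<open>g\<close> are the parameters \<open>g'\<close>, \<open>g''\<close>, \<open>g'''\<close>; the Schwarzian
  condition is stated with the denominator \<open>g'\<^sup>2\<close> cleared.\<close>
locale feigenbaum_map =
  fixes g g' g'' g''' :: "real \<Rightarrow> real" and lam :: real
  assumes lam_gt_two: "2 < lam"
    and maps_into: "x \<in> {-1..1} \<Longrightarrow> g x \<in> {-1..1}"
    and functional_equation: "x \<in> {-1..1} \<Longrightarrow> g x = - lam * g (g (- x / lam))"
    and has_deriv: "x \<in> {-1..1} \<Longrightarrow> (g has_real_derivative g' x) (at x)"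
    and has_deriv2: "x \<in> {-1..1} \<Longrightarrow> (g' has_real_derivative g'' x) (at x)"
    and has_deriv3: "x \<in> {-1..1} \<Longrightarrow> (g'' has_real_derivative g''' x) (at x)"
    and neg_schwarzian: "x \<in> {-1..1} \<Longrightarrow> g' x \<noteq> 0 \<Longrightarrow> g''' x * g' x - 3/2 * (g'' x)^2 < 0"
    and deriv_minus_one_pos: "0 < g' (-1)"
    and expanding_fixed_point_unique: "x \<in> {-1..1} \<Longrightarrow> g x = x \<Longrightarrow> 0 < g' x \<Longrightarrow> x = -1"
    and g_one: "g 1 = -1"
    and even: "x \<in> {-1..1} \<Longrightarrow> g (- x) = g x"
    and strict_max: "x \<in> {-1..1} \<Longrightarrow> x \<noteq> 0 \<Longrightarrow> g x < g 0"
    and concave: "concave_on {- g 0..g 0} g"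
    and critical_orbit: "g (g 0) = - g 0 / lam" "g' (g 0) = - lam"
begin

lemma inv_lam_bounds: "0 < 1 / lam" "1 / lam < 1"
  using lam_gt_two by auto

lemma inv_lam_in_domain: "1 / lam \<in> {-1<..<1}" "1 / lam \<in> {-1..1}"
  using lam_gt_two by (auto simp: field_simps)

lemma rescaled_in_domain: "x \<in> {-1..1} \<Longrightarrow> - x / lam \<in> {-1..1}"
  using lam_gt_two by (auto simp: field_simps)

lemma continuous_on_g: "continuous_on {-1..1} g"
  using has_deriv by (meson DERIV_isCont continuous_at_imp_continuous_on)

lemma continuous_on_g': "continuous_on {-1..1} g'"
  using has_deriv2 by (meson DERIV_isCont continuous_at_imp_continuous_on)

lemma eventually_nhds_in_domain: "(x::real) \<in> {-1<..<1} \<Longrightarrow> \<forall>\<^sub>F t in nhds x. t \<in> {-1..1}"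
  unfolding eventually_nhds by (intro exI[of _ "{-1<..<1}"]) auto

lemma g_le_crit_value: "x \<in> {-1..1} \<Longrightarrow> g x \<le> g 0"
  using strict_max[of x] by (cases "x = 0") auto

lemma deriv_zero: "g' 0 = 0"
proof (rule DERIV_local_max[OF has_deriv[of 0]])
  show "(0::real) < 1" by simp
  show "\<forall>y. \<bar>0 - y\<bar> < 1 \<longrightarrow> g y \<le> g 0"
    by (auto intro!: g_le_crit_value)
qed simp

lemma crit_value_pos: "0 < g 0"
proof -
  have "g 0 \<noteq> 0" using critical_orbit(2) deriv_zero lam_gt_two by auto
  moreover have "\<not> g 0 < 0"
  proof
    assume "g 0 < 0"
    moreover have "0 < - g 0 / lam"
      using \<open>g 0 < 0\<close> lam_gt_two by (intro divide_pos_pos) auto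
    ultimately have "g 0 < g (g 0)" using critical_orbit(1) by simp
    then show False using g_le_crit_value maps_into[of 0] by fastforce
  qed
  ultimately show ?thesis by linarith
qed

lemma crit_value_lt_one: "g 0 < 1"
proof -
  have "g 0 \<noteq> 1"
  proof
    assume "g 0 = 1"
    then have "- 1 = - 1 / lam" using critical_orbit(1) g_one by simp
    then show False using lam_gt_two by simp
  qed
  then show ?thesis using maps_into[of 0] by simp
qed

lemma deriv_sign_concave_part:
  assumes "z \<in> {- g 0<..<g 0}" "z \<noteq> 0"
  shows "z * g' z < 0"
proof -
  have z: "z \<in> {-1..1}" using assms crit_value_lt_one by auto
  have "g 0 - g z \<le> g' z * (0 - z)"
    by (rule concave_on_imp_below_tangent[OF concave])
      (use assms crit_value_pos has_deriv[OF z] in auto)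
  moreover have "g z < g 0" using strict_max z assms(2) .
  ultimately show ?thesis by (simp add: algebra_simps)
qed

lemma g_ge_on_concave_part:
  assumes "y \<in> {- g 0..g 0}"
  shows "- g 0 / lam \<le> g y"
proof -
  have "g (g 0) \<le> g \<bar>y\<bar>"
  proof (rule DERIV_nonpos_imp_nonincreasing[of "\<bar>y\<bar>" "g 0" g])
    fix x assume x: "\<bar>y\<bar> \<le> x" "x \<le> g 0"
    then have "x \<in> {-1..1}" using crit_value_lt_one by auto
    moreover have "g' x \<le> 0"
    proof -
      consider "x = 0" | "x = g 0" | "x \<in> {- g 0<..<g 0}" "x \<noteq> 0"
        using x crit_value_pos by fastforce
      then show ?thesis
        using deriv_zero critical_orbit(2) lam_gt_two deriv_sign_concave_part[of x] x
        by cases (auto simp: mult_less_0_iff)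
    qed
    ultimately show "\<exists>D. (g has_real_derivative D) (at x) \<and> D \<le> 0"
      using has_deriv by blast
  qed (use assms in auto)
  moreover have "g \<bar>y\<bar> = g y"
    using even[of y] assms crit_value_lt_one by (cases "0 \<le> y") auto
  ultimately show ?thesis using critical_orbit(1) by simp
qed

lemma g_g_inv_lam: "g (g (1 / lam)) = 1 / lam"
proof -
  have "g 1 = - lam * g (g (- 1 / lam))" using functional_equation[of 1] by simp
  also have "g (- 1 / lam) = g (1 / lam)"
    using even[of "1 / lam"] inv_lam_bounds by simp
  finally show ?thesis using g_one lam_gt_two by (simp add: field_simps)
qed

lemma inv_lam_le_crit_value: "1 / lam \<le> g 0"
  using g_le_crit_value[of "g (1 / lam)"] maps_into[of "1 / lam"] inv_lam_bounds g_g_inv_lam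
  by simp

lemma deriv_functional_equation:
  assumes "x \<in> {-1..1}"
  shows "g' x = g' (g (- x / lam)) * g' (- x / lam)"
proof (rule eq_on_Icc_of_eq_on_Ioo[OF _ continuous_on_g' _ _ assms])
  have "continuous_on {-1..1} (\<lambda>x. - x / lam)"
    by (intro continuous_intros) (use lam_gt_two in auto)
  then have "continuous_on {-1..1} (\<lambda>x. g (- x / lam))"
    and "continuous_on {-1..1} (\<lambda>x. g' (- x / lam))"
    using rescaled_in_domain
    by (auto intro!: continuous_on_compose2[OF continuous_on_g]
        continuous_on_compose2[OF continuous_on_g'])
  then have "continuous_on {-1..1} (\<lambda>x. g' (g (- x / lam)))"
    using rescaled_in_domain maps_into by (auto intro!: continuous_on_compose2[OF continuous_on_g'])
  from this \<open>continuous_on {-1..1} (\<lambda>x. g' (- x / lam))\<close>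
  show "continuous_on {-1..1} (\<lambda>x. g' (g (- x / lam)) * g' (- x / lam))"
    by (rule continuous_on_mult)
  fix x :: real assume x: "x \<in> {-1<..<1}"
  then have xI: "x \<in> {-1..1}" and y: "- x / lam \<in> {-1..1}" using rescaled_in_domain by auto
  have "((\<lambda>t. - t / lam) has_real_derivative - 1 / lam) (at x)"
    using lam_gt_two by (auto intro!: derivative_eq_intros)
  from DERIV_chain2[OF has_deriv[OF maps_into[OF y]] DERIV_chain2[OF has_deriv[OF y] this]]
  have "((\<lambda>t. - lam * g (g (- t / lam))) has_real_derivative
           - lam * (g' (g (- x / lam)) * (g' (- x / lam) * (- 1 / lam)))) (at x)"
    by (rule DERIV_cmult)
  also have "- lam * (g' (g (- x / lam)) * (g' (- x / lam) * (- 1 / lam)))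
               = g' (g (- x / lam)) * g' (- x / lam)"
    using lam_gt_two by simp
  finally have "(g has_real_derivative g' (g (- x / lam)) * g' (- x / lam)) (at x)"
    by (rule has_field_derivative_transform_within_open[OF _ open_greaterThanLessThan x])
      (simp add: functional_equation)
  then show "g' x = g' (g (- x / lam)) * g' (- x / lam)"
    using DERIV_unique[OF has_deriv[OF xI]] by blast
qed simp_all

lemma deriv_odd:
  assumes "x \<in> {-1..1}"
  shows "g' (- x) = - g' x"
proof (rule eq_on_Icc_of_eq_on_Ioo[OF _ _ _ _ assms])
  show "continuous_on {-1..1} (\<lambda>x. g' (- x))"
    by (rule continuous_on_compose2[OF continuous_on_g']) (auto intro: continuous_intros)
  show "continuous_on {-1..1} (\<lambda>x. - g' x)"
    by (intro continuous_on_minus continuous_on_g')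
  fix x :: real assume x: "x \<in> {-1<..<1}"
  then have xI: "x \<in> {-1..1}" and "- x \<in> {-1..1}" by auto
  have "((\<lambda>t. - t) has_real_derivative - 1) (at x)"
    by (auto intro!: derivative_eq_intros)
  from DERIV_chain2[OF has_deriv[OF \<open>- x \<in> {-1..1}\<close>] this]
  have "((\<lambda>t. g (- t)) has_real_derivative - g' (- x)) (at x)"
    by simp
  then have "(g has_real_derivative - g' (- x)) (at x)"
    by (rule has_field_derivative_transform_within_open[OF _ open_greaterThanLessThan x])
      (simp add: even)
  then show "g' (- x) = - g' x"
    using DERIV_unique[OF has_deriv[OF xI]] by fastforce
qed simp

text \<open>A second critical point \<open>x\<close> would make \<open>g (-x/lam)\<close> critical, hence zero; then
  \<open>g x = -lam * g 0\<close> forces \<open>g 0 = 1/lam\<close>, and \<open>g (g 0)\<close> would be a second maximum point.\<close>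
lemma deriv_nonzero:
  assumes x: "x \<in> {-1<..<1}" "x \<noteq> 0"
  shows "g' x \<noteq> 0"
proof
  assume "g' x = 0"
  define y where "y = - x / lam"
  have "\<bar>y\<bar> < 1 / lam"
    using x lam_gt_two by (auto simp: y_def abs_div intro!: divide_strict_right_mono)
  then have "\<bar>y\<bar> < g 0" using inv_lam_le_crit_value by linarith
  then have y: "y \<in> {- g 0<..<g 0}" "y \<noteq> 0"
    using x(2) lam_gt_two by (auto simp: abs_less_iff) (simp add: y_def)
  then have "g' y \<noteq> 0" using deriv_sign_concave_part by fastforce
  then have gy: "g' (g y) = 0"
    using deriv_functional_equation[of x] x \<open>g' x = 0\<close> by (simp add: y_def)
  have "- g 0 < - g 0 / lam"
    using crit_value_pos lam_gt_two by (simp add: field_simps)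
  moreover have "g y \<noteq> g 0" using critical_orbit(2) lam_gt_two gy by auto
  ultimately have "g y \<in> {- g 0<..<g 0}"
    using g_ge_on_concave_part[of y] g_le_crit_value[of y] y crit_value_lt_one by fastforce
  then have "g y = 0" using deriv_sign_concave_part[of "g y"] gy by fastforce
  then have "g x = - lam * g 0" using functional_equation[of x] x by (simp add: y_def)
  then have "g 0 \<le> 1 / lam" using maps_into[of x] x lam_gt_two by (auto simp: field_simps)
  then have "g 0 = 1 / lam" using inv_lam_le_crit_value by simp
  then have "g (g (g 0)) = g 0" using g_g_inv_lam by simp
  moreover have "g (g 0) \<noteq> 0" "g (g 0) \<in> {-1..1}"
    using critical_orbit(1) crit_value_pos lam_gt_two maps_into[of "g 0"] maps_into[of 0] by auto
  ultimately show False using strict_max[of "g (g 0)"] by simp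
qed

lemma deriv_neg_right:
  assumes "0 < z" "z < 1"
  shows "g' z < 0"
proof (cases "z < g 0")
  case True
  then show ?thesis
    using deriv_sign_concave_part[of z] assms crit_value_pos by (auto simp: mult_less_0_iff)
next
  case False
  show ?thesis
  proof (rule ccontr)
    assume "\<not> g' z < 0"
    moreover have "g' (g 0 / 2) < 0"
      using deriv_sign_concave_part[of "g 0 / 2"] crit_value_pos by (auto simp: mult_less_0_iff)
    moreover have "continuous_on {g 0 / 2..z} g'"
      by (rule continuous_on_subset[OF continuous_on_g']) (use assms crit_value_pos in auto)
    ultimately obtain t where "g 0 / 2 \<le> t" "t \<le> z" "g' t = 0"
      using IVT'[of g' "g 0 / 2" 0 z] False crit_value_pos by fastforce
    then show False using deriv_nonzero[of t] assms crit_value_pos by fastforce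
  qed
qed

lemma deriv_pos_left:
  assumes "-1 \<le> z" "z < 0"
  shows "0 < g' z"
proof (cases "z = -1")
  case True
  then show ?thesis using deriv_minus_one_pos by simp
next
  case False
  then have "g' (- z) < 0" using deriv_neg_right[of "- z"] assms by simp
  then show ?thesis using deriv_odd[of "- z"] assms by simp
qed

lemma g_strict_decreasing_right:
  assumes "0 \<le> u" "u < v" "v \<le> 1"
  shows "g v < g u"
proof (rule DERIV_neg_imp_decreasing_open[OF \<open>u < v\<close>])
  show "\<exists>D. (g has_real_derivative D) (at x) \<and> D < 0" if "u < x" "x < v" for x
    using has_deriv[of x] deriv_neg_right[of x] that assms by auto
  show "continuous_on {u..v} g"
    by (rule continuous_on_subset[OF continuous_on_g]) (use assms in auto)
qed

lemma g_eq_iff_abs_eq: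
  assumes "x \<in> {-1..1}" "y \<in> {-1..1}"
  shows "g x = g y \<longleftrightarrow> \<bar>x\<bar> = \<bar>y\<bar>"
proof -
  have "g \<bar>t\<bar> = g t" if "t \<in> {-1..1}" for t
    using even[OF that] by (cases "0 \<le> t") auto
  then have "g x = g y \<longleftrightarrow> g \<bar>x\<bar> = g \<bar>y\<bar>" using assms by simp
  also have "\<dots> \<longleftrightarrow> \<bar>x\<bar> = \<bar>y\<bar>"
    using g_strict_decreasing_right[of "\<bar>x\<bar>" "\<bar>y\<bar>"] g_strict_decreasing_right[of "\<bar>y\<bar>" "\<bar>x\<bar>"] assms
    by (cases "\<bar>x\<bar>" "\<bar>y\<bar>" rule: linorder_cases) (auto simp: abs_le_iff)
  finally show ?thesis .
qed

lemma above_diagonal_left: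
  assumes "-1 < y" "y \<le> 0"
  shows "y < g y"
proof (rule ccontr)
  assume "\<not> y < g y"
  moreover have "continuous_on {y..0} g"
    by (rule continuous_on_subset[OF continuous_on_g]) (use assms in auto)
  then have "continuous_on {y..0} (\<lambda>t. g t - t)"
    by (intro continuous_on_diff continuous_on_id)
  ultimately obtain t where t: "y \<le> t" "t \<le> 0" "g t - t = 0"
    using IVT'[of "\<lambda>t. g t - t" y 0 0] crit_value_pos assms by auto
  then have "t \<noteq> 0" using crit_value_pos by auto
  then have "t = -1"
    using expanding_fixed_point_unique[of t] deriv_pos_left[of t] t assms by auto
  then show False using t assms by simp
qed

lemma second_iterate_below_diagonal:
  assumes "0 \<le> y" "y < 1 / lam"
  shows "g (g y) < y"
proof -
  have "lam * y < 1" "0 \<le> lam * y" using assms lam_gt_two by (simp_all add: field_simps)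
  then have "-1 < - lam * y" "- lam * y \<le> 0" by linarith+
  then have "- lam * y < g (- lam * y)" by (rule above_diagonal_left)
  also have "g (- lam * y) = - lam * g (g y)"
    using functional_equation[of "- lam * y"] \<open>-1 < - lam * y\<close> \<open>- lam * y \<le> 0\<close> lam_gt_two
    by simp
  finally show ?thesis using lam_gt_two by simp
qed

lemma period_two_point_rescales_to_fixed_point:
  assumes "\<bar>y\<bar> \<le> 1 / lam" "g (g y) = y"
  shows "g (- lam * y) = - lam * y"
proof -
  have "- lam * y \<in> {-1..1}"
    using assms(1) lam_gt_two by (auto simp: field_simps abs_le_iff)
  then show ?thesis using functional_equation[of "- lam * y"] assms(2) lam_gt_two by simp
qed

definition gg' :: "real \<Rightarrow> real"
  where "gg' = (\<lambda>t. g' (g t) * g' t)"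

definition gg'' :: "real \<Rightarrow> real"
  where "gg'' = (\<lambda>t. g'' (g t) * (g' t)^2 + g' (g t) * g'' t)"

definition gg''' :: "real \<Rightarrow> real"
  where "gg''' = (\<lambda>t. g''' (g t) * (g' t)^3 + 3 * g'' (g t) * g' t * g'' t + g' (g t) * g''' t)"

lemma has_deriv_second_iterate_minus_id:
  assumes "t \<in> {-1..1}"
  shows "((\<lambda>t. g (g t) - t) has_real_derivative gg' t - 1) (at t)"
  unfolding gg'_def
  by (intro DERIV_diff DERIV_ident
      DERIV_chain2[OF has_deriv[OF maps_into[OF assms]] has_deriv[OF assms]])

lemma has_deriv_gg':
  assumes "t \<in> {-1..1}"
  shows "(gg' has_real_derivative gg'' t) (at t)"
  unfolding gg'_def gg''_def
  by (rule higher_chain_rule(1)[where f' = g' and f'' = g'' and f''' = g''' and h = g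
      and h' = g' and h'' = g'' and h''' = g''' and x = t,
      OF has_deriv[OF assms] has_deriv2[OF assms] has_deriv3[OF assms]
      has_deriv2[OF maps_into[OF assms]] has_deriv3[OF maps_into[OF assms]]])

lemma has_deriv_gg'':
  assumes "t \<in> {-1..1}"
  shows "(gg'' has_real_derivative gg''' t) (at t)"
  unfolding gg''_def gg'''_def
  by (rule higher_chain_rule(2)[where f' = g' and f'' = g'' and f''' = g''' and h = g
      and h' = g' and h'' = g'' and h''' = g''' and x = t,
      OF has_deriv[OF assms] has_deriv2[OF assms] has_deriv3[OF assms]
      has_deriv2[OF maps_into[OF assms]] has_deriv3[OF maps_into[OF assms]]])

lemma neg_schwarzian_second_iterate:
  assumes "t \<in> {-1..1}" "g' t \<noteq> 0" "g' (g t) \<noteq> 0"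
  shows "gg''' t * gg' t - 3/2 * (gg'' t)^2 < 0"
  unfolding gg'_def gg''_def gg'''_def
  by (rule neg_schwarzian_comp[OF neg_schwarzian[OF maps_into[OF assms(1)] assms(3)]
      neg_schwarzian[OF assms(1,2)] assms(3,2)])

text \<open>The second iterate cannot be the identity on an interval, since the identity has zero
  Schwarzian derivative.\<close>
lemma second_iterate_not_identity_on_interval:
  assumes "u < v" "{u..v} \<subseteq> {-1..1}" "\<And>t. t \<in> {u<..<v} \<Longrightarrow> g (g t) = t"
  shows False
proof -
  have dom: "t \<in> {-1..1}" if "t \<in> {u<..<v}" for t using that assms(2) by auto
  have one: "gg' t = 1" if t: "t \<in> {u<..<v}" for t
  proof -
    have "gg' t - 1 = 0"
      by (rule has_real_derivative_locally_constant[where c = 0,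
            OF has_deriv_second_iterate_minus_id t]) (use dom t assms(3) in auto)
    then show ?thesis by simp
  qed
  have zero: "gg'' t = 0" if t: "t \<in> {u<..<v}" for t
    by (rule has_real_derivative_locally_constant[where c = 1, OF has_deriv_gg' t])
      (use dom t one in auto)
  define m where "m = (u + v) / 2"
  have m: "m \<in> {u<..<v}" using assms(1) by (simp add: m_def)
  have "gg''' m = 0"
    by (rule has_real_derivative_locally_constant[where c = 0, OF has_deriv_gg'' m])
      (use dom m zero in auto)
  moreover have "g' m \<noteq> 0" "g' (g m) \<noteq> 0" using one[OF m] by (auto simp: gg'_def)
  then have "gg''' m * gg' m - 3/2 * (gg'' m)^2 < 0"
    using neg_schwarzian_second_iterate dom[OF m] by simp
  ultimately show False using one[OF m] zero[OF m] by simp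
qed

lemma not_eventually_second_iterate_above_at_left:
  "\<not> (\<forall>\<^sub>F t in at_left (1 / lam). 0 < g (g t) - t)"
proof
  assume "\<forall>\<^sub>F t in at_left (1 / lam). 0 < g (g t) - t"
  moreover have "\<forall>\<^sub>F t in at_left (1 / lam). t \<in> {0<..<1 / lam}"
    using inv_lam_bounds by (intro eventually_at_left_real) simp
  then have "\<forall>\<^sub>F t in at_left (1 / lam). g (g t) - t < 0"
    by (rule eventually_mono) (auto intro: second_iterate_below_diagonal)
  ultimately have "\<forall>\<^sub>F t in at_left (1 / lam). False"
    by eventually_elim simp
  then show False by simp
qed

lemma second_iterate_deriv_ge_one: "1 \<le> gg' (1 / lam)"
proof (rule ccontr)
  assume "\<not> 1 \<le> gg' (1 / lam)"
  with inv_lam_in_domain(2) have "\<forall>\<^sub>F t in at_left (1 / lam). g (g (1 / lam)) - 1 / lam < g (g t) - t"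
    by (intro eventually_greater_at_left_if_DERIV_neg[OF has_deriv_second_iterate_minus_id]) auto
  then show False using not_eventually_second_iterate_above_at_left g_g_inv_lam by simp
qed

lemma g_inv_lam_not_less: "\<not> g (1 / lam) < 1 / lam"
proof
  define p a where "p = 1 / lam" and "a = g p"
  assume "g (1 / lam) < 1 / lam"
  then have "a < p" by (simp add: p_def a_def)
  have gga: "g a = p" using g_g_inv_lam by (simp add: p_def a_def)
  have "0 < p" "p \<le> g 0" using inv_lam_bounds(1) inv_lam_le_crit_value by (simp_all add: p_def)
  then have "p \<in> {- g 0..g 0}" by simp
  then have "- g 0 / lam \<le> a" using g_ge_on_concave_part by (simp add: a_def)
  moreover have "- 1 / lam \<le> - g 0 / lam"
    using crit_value_lt_one lam_gt_two by (simp add: divide_right_mono)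
  ultimately have "- p \<le> a" by (simp add: p_def)
  define y where "y = - lam * a"
  have y_fixed: "g y = y"
    unfolding y_def using \<open>a < p\<close> \<open>- p \<le> a\<close> gga
    by (intro period_two_point_rescales_to_fixed_point) (auto simp: p_def a_def)
  have "-1 < y" "y < 1"
    using \<open>a < p\<close> \<open>- g 0 / lam \<le> a\<close> crit_value_lt_one lam_gt_two
    by (auto simp: y_def p_def field_simps)
  have "0 < y"
  proof (rule ccontr)
    assume "\<not> 0 < y"
    then show False using above_diagonal_left[of y] y_fixed \<open>-1 < y\<close> by simp
  qed
  have "y / lam = - a" using lam_gt_two by (simp add: y_def)
  then have "p = g (y / lam)"
    using gga even[of a] maps_into[of p] inv_lam_in_domain by (simp add: a_def p_def)
  also have "\<dots> > g y"
    using \<open>0 < y\<close> \<open>y < 1\<close> lam_gt_two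
    by (intro g_strict_decreasing_right) (auto simp: field_simps)
  finally have "y < p" using y_fixed by simp
  then have "g (- lam * y) = - lam * y"
    using \<open>0 < y\<close> y_fixed by (intro period_two_point_rescales_to_fixed_point) (auto simp: p_def)
  moreover have "- lam * y < g (- lam * y)"
    using \<open>0 < y\<close> \<open>y < p\<close> lam_gt_two
    by (intro above_diagonal_left) (auto simp: p_def field_simps)
  ultimately show False by simp
qed

lemma second_iterate_deriv_ge_on_swapped_interval:
  assumes "0 < u" "u < v" "v < 1" "g u = v" "g v = u" "t \<in> {u..v}"
  shows "gg' u \<le> gg' t"
proof -
  have dom: "s \<in> {-1..1}" "0 < s" "s < 1" if "s \<in> {u..v}" for s using that assms by auto
  have image: "g s \<in> {u..v}" if s: "s \<in> {u..v}" for s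
  proof -
    have "g s \<le> v" using g_strict_decreasing_right[of u s] s assms by (cases "s = u") auto
    moreover have "u \<le> g s" using g_strict_decreasing_right[of s v] s assms by (cases "s = v") auto
    ultimately show ?thesis by simp
  qed
  have neg: "g' s < 0" "g' (g s) < 0" if "s \<in> {u..v}" for s
    using deriv_neg_right dom[OF that] dom[OF image[OF that]] by auto
  have "min (gg' u) (gg' v) \<le> gg' t"
  proof (rule neg_schwarzian_min_at_endpoints[OF _ has_deriv_gg' has_deriv_gg''])
    show "gg''' s * gg' s - 3/2 * (gg'' s)^2 < 0" if "s \<in> {u..v}" for s
      using neg_schwarzian_second_iterate dom[OF that] neg[OF that] by simp
    show "0 < gg' s" if "s \<in> {u..v}" for s
      using neg[OF that] by (simp add: gg'_def mult_neg_neg)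
  qed (use assms dom in auto)
  moreover have "gg' v = gg' u" using assms(4,5) by (simp add: gg'_def)
  ultimately show ?thesis by simp
qed

text \<open>Otherwise \<open>g\<close> maps \<open>[1/lam, g(1/lam)]\<close> onto itself reversing the endpoints, so
  \<open>(g \<circ> g)' \<ge> 1\<close> there, which forces \<open>g \<circ> g = id\<close> on it.\<close>
lemma g_inv_lam_not_greater: "\<not> 1 / lam < g (1 / lam)"
proof
  define p a where "p = 1 / lam" and "a = g p"
  assume "1 / lam < g (1 / lam)"
  then have "p < a" by (simp add: p_def a_def)
  have gga: "g a = p" using g_g_inv_lam by (simp add: p_def a_def)
  have "0 < p" using inv_lam_bounds by (simp add: p_def)
  have "a < 1" using g_le_crit_value[of p] inv_lam_in_domain(2) crit_value_lt_one
    by (simp add: a_def p_def)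
  have in_domain: "t \<in> {-1..1}" if "t \<in> {p..a}" for t
    using that \<open>0 < p\<close> \<open>a < 1\<close> by auto
  have ge_one: "1 \<le> gg' t" if "t \<in> {p..a}" for t
    using second_iterate_deriv_ge_on_swapped_interval[OF \<open>0 < p\<close> \<open>p < a\<close> \<open>a < 1\<close> _ gga that]
      second_iterate_deriv_ge_one by (simp add: a_def p_def)
  have mono: "g (g s) - s \<le> g (g t) - t" if "p \<le> s" "s \<le> t" "t \<le> a" for s t
  proof (rule DERIV_nonneg_imp_nondecreasing[OF \<open>s \<le> t\<close>])
    fix y assume "s \<le> y" "y \<le> t"
    then have "y \<in> {p..a}" using that by simp
    then show "\<exists>D. ((\<lambda>t. g (g t) - t) has_real_derivative D) (at y) \<and> 0 \<le> D"
      using has_deriv_second_iterate_minus_id[OF in_domain] ge_one by force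
  qed
  have "g (g p) - p = 0" "g (g a) - a = 0" using gga by (simp_all add: a_def)
  then have "g (g t) = t" if "t \<in> {p<..<a}" for t
    using mono[of p t] mono[of t a] that by simp
  then show False
    using second_iterate_not_identity_on_interval[OF \<open>p < a\<close>] in_domain by blast
qed

lemma inv_lam_fixed: "g (1 / lam) = 1 / lam"
  using g_inv_lam_not_less g_inv_lam_not_greater by linarith

text \<open>If \<open>g' (1/lam) = -1\<close>, then \<open>g \<circ> g - id\<close> vanishes to second order at \<open>1/lam\<close> with
  negative third derivative, so it is positive just left of \<open>1/lam\<close>.\<close>
lemma multiplier_lt_minus_one: "g' (1 / lam) < -1"
proof -
  define p where "p = 1 / lam"
  have p: "p \<in> {-1<..<1}" "g p = p" using inv_lam_in_domain inv_lam_fixed by (simp_all add: p_def)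
  have "g' p < 0" using deriv_neg_right inv_lam_bounds by (simp add: p_def)
  have "g' p \<noteq> -1"
  proof
    assume "g' p = -1"
    then have gg'p: "gg' p = 1" and "gg'' p = 0" using p by (auto simp: gg'_def gg''_def)
    moreover have "gg''' p * gg' p - 3/2 * (gg'' p)^2 < 0"
      using neg_schwarzian_second_iterate p \<open>g' p = -1\<close> by simp
    ultimately have "gg''' p < 0" by simp
    have near: "\<forall>\<^sub>F t in nhds p. t \<in> {-1..1}" using eventually_nhds_in_domain p(1) .
    have "\<forall>\<^sub>F t in at_left p. 0 < gg'' t"
      using eventually_greater_at_left_if_DERIV_neg[OF has_deriv_gg'' \<open>gg''' p < 0\<close>] p
        \<open>gg'' p = 0\<close> by simp
    moreover have "\<forall>\<^sub>F t in nhds p. (gg' has_real_derivative gg'' t) (at t)"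
      using near by (rule eventually_mono) (rule has_deriv_gg')
    ultimately have "\<forall>\<^sub>F t in at_left p. gg' t - 1 < 0"
      using eventually_less_at_left_if_deriv_pos gg'p by fastforce
    moreover have "\<forall>\<^sub>F t in nhds p. ((\<lambda>t. g (g t) - t) has_real_derivative gg' t - 1) (at t)"
      using near by (rule eventually_mono) (rule has_deriv_second_iterate_minus_id)
    ultimately have "\<forall>\<^sub>F t in at_left p. g (g p) - p < g (g t) - t"
      by (intro eventually_greater_at_left_if_deriv_neg)
    then show False using not_eventually_second_iterate_above_at_left p(2) by (simp add: p_def)
  qed
  moreover have "1 \<le> (g' p)^2"
    using second_iterate_deriv_ge_one p(2) by (simp add: gg'_def p_def power2_eq_square)
  ultimately show ?thesis
    using \<open>g' p < 0\<close> abs_square_less_1[of "g' p"] by (simp add: p_def)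
qed

lemma fixed_point_with_neg_multiplier:
  assumes "x \<in> {-1..1}" "g x = x" "g' x < 0"
  shows "x = 1 / lam"
proof -
  have "0 < x"
  proof (rule ccontr)
    assume "\<not> 0 < x"
    then consider "x = 0" | "x < 0" by linarith
    then show False using assms deriv_zero deriv_pos_left[of x] by cases auto
  qed
  then show ?thesis
    using g_strict_decreasing_right[of x "1 / lam"] g_strict_decreasing_right[of "1 / lam" x]
      inv_lam_fixed inv_lam_bounds assms
    by (cases x "1 / lam" rule: linorder_cases) auto
qed

lemma multiplier_le_abs_deriv:
  assumes "x \<in> {-1..-1/lam} \<union> {1/lam..1}"
  shows "\<bar>g' (1 / lam)\<bar> \<le> \<bar>g' x\<bar>"
proof -
  define p where "p = 1 / lam"
  have "g' p < -1" using multiplier_lt_minus_one by (simp add: p_def)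
  have p: "0 < p" "p < 1" using inv_lam_bounds by (auto simp: p_def)
  have left: "\<bar>g' p\<bar> \<le> g' y" if y: "y \<in> {-1..-p}" for y
  proof -
    have pos: "0 < g' t" if "t \<in> {-1..-p}" for t using deriv_pos_left[of t] that p by simp
    have "min (g' (-1)) (g' (-p)) \<le> g' y"
      by (rule neg_schwarzian_min_at_endpoints[OF _ has_deriv2 has_deriv3 pos neg_schwarzian y])
        (use p pos in \<open>auto simp: less_imp_neq[symmetric]\<close>)
    moreover have "g' (-1) = (g' p)^2"
      using deriv_functional_equation[of "-1"] inv_lam_fixed by (simp add: p_def power2_eq_square)
    moreover have "g' (- p) = \<bar>g' p\<bar>" using deriv_odd[of p] p \<open>g' p < -1\<close> by simp
    moreover have "\<bar>g' p\<bar> * 1 \<le> \<bar>g' p\<bar> * \<bar>g' p\<bar>"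
      using \<open>g' p < -1\<close> by (intro mult_left_mono) auto
    then have "\<bar>g' p\<bar> \<le> (g' p)^2" by (simp add: power2_eq_square)
    ultimately show ?thesis by simp
  qed
  have "x \<in> {-1..-p} \<union> {p..1}" using assms by (simp add: p_def)
  then consider "x \<in> {-1..-p}" | "- x \<in> {-1..-p}" "x \<in> {-1..1}" using p by auto
  then show ?thesis
  proof cases
    case 1
    then show ?thesis using left[of x] by (simp add: p_def)
  next
    case 2
    then show ?thesis using left[of "- x"] deriv_odd[of x] by (simp add: p_def)
  qed
qed

end

theorem mainTheorem3:
  fixes g :: "real \<Rightarrow> real" and lam :: real
    and c0 q0 hq0 hm1 :: real
  assumes lam_bounds: "2.5029 \<le> lam" "lam < 2.503"
    and maps: "\<forall>x\<in>{-1..1}. g x \<in> {-1..1}"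
    and feig: "\<forall>x\<in>{-1..1}. g x = - lam * g (g (- x / lam))"
    and analytic: "\<exists>S G. open S \<and> complex_of_real ` {-1..1} \<subseteq> S \<and> G holomorphic_on S
                     \<and> (\<forall>x. complex_of_real x \<in> S \<longrightarrow> G (complex_of_real x) = complex_of_real (g x))"
    and fix_m1: "g (-1) = -1" "deriv g (-1) > 0"
    and uniq_pos_fix: "\<forall>x\<in>{-1..1}. g x = x \<and> deriv g x > 0 \<longrightarrow> x = -1"
    and g1: "g 1 = -1"
    and crit: "c0 \<in> {-1<..<1}" "deriv g c0 = 0" "deriv (deriv g) c0 \<noteq> 0"
    and maxim: "\<forall>x\<in>{-1..1}. x \<noteq> c0 \<longrightarrow> g x < g c0"
    and even: "\<forall>x\<in>{-1..1}. g (- x) = g x"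
    and concave: "concave_on {- g c0 .. g c0} g"
    and critval: "g (g c0) = - g c0 / lam" "deriv g (g c0) = - lam"
    and schw: "\<forall>x\<in>{-1..1}. deriv g x \<noteq> 0 \<longrightarrow> schwarzian g x < 0"
    and q0: "q0 \<in> {-1..1}" "g q0 = q0" "deriv g q0 < 0"
    and hq0: "hq0 \<in> {-1..1}" "hq0 \<noteq> q0" "g hq0 = g q0"
    and hm1: "hm1 \<in> {-1..1}" "hm1 \<noteq> -1" "g hm1 = g (-1)"
  shows "\<forall>x \<in> {-1..hq0} \<union> {q0..hm1}.
           \<bar>deriv g x\<bar> \<ge> \<bar>deriv g q0\<bar> \<and> \<bar>deriv g q0\<bar> > 1"
proof -
  obtain S G where S: "open S" "complex_of_real ` {-1..1} \<subseteq> S" and hol: "G holomorphic_on S"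
    and restr: "\<And>x. complex_of_real x \<in> S \<Longrightarrow> G (complex_of_real x) = complex_of_real (g x)"
    using analytic by blast
  have in_S: "complex_of_real x \<in> S" if "x \<in> {-1..1}" for x
    using S(2) that by (meson image_subset_iff)
  have "c0 = 0" using strict_max_of_even_at_zero even crit(1) maxim by blast
  interpret feigenbaum_map g "deriv g" "deriv (deriv g)" "deriv (deriv (deriv g))" lam
  proof
    fix x :: real assume x: "x \<in> {-1..1}"
    show "g x \<in> {-1..1}" "g x = - lam * g (g (- x / lam))" "g (- x) = g x"
      "g x = x \<Longrightarrow> 0 < deriv g x \<Longrightarrow> x = -1" "x \<noteq> 0 \<Longrightarrow> g x < g 0"
      using maps feig even uniq_pos_fix maxim \<open>c0 = 0\<close> x by blast+
    show "(g has_real_derivative deriv g x) (at x)"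
      "(deriv g has_real_derivative deriv (deriv g) x) (at x)"
      "(deriv (deriv g) has_real_derivative deriv (deriv (deriv g)) x) (at x)"
      using holomorphic_restriction_has_real_derivatives[OF S(1) hol restr in_S[OF x]] by blast+
    show "deriv g x \<noteq> 0 \<Longrightarrow>
            deriv (deriv (deriv g)) x * deriv g x - 3/2 * (deriv (deriv g) x)^2 < 0"
      using schw schwarzian_neg_iff x by blast
  qed (use lam_bounds fix_m1 g1 concave critval \<open>c0 = 0\<close> in simp_all)
  have "q0 = 1 / lam" using fixed_point_with_neg_multiplier q0 by blast
  have "\<bar>hq0\<bar> = \<bar>q0\<bar>" "\<bar>hm1\<bar> = \<bar>-1\<bar>" using g_eq_iff_abs_eq hq0 hm1 q0(1) by simp_all
  then have "hq0 = - (1 / lam)" "hm1 = 1"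
    using hq0(2) hm1(2) \<open>q0 = 1 / lam\<close> by (simp_all add: abs_eq_iff)
  then have "{-1..hq0} \<union> {q0..hm1} = {-1..-1/lam} \<union> {1/lam..1}" using \<open>q0 = 1 / lam\<close> by simp
  then show ?thesis
    using multiplier_le_abs_deriv multiplier_lt_minus_one \<open>q0 = 1 / lam\<close> by simp
qed

end
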